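(* If $X$ is a nonempty topological space and $\Omega\neq\Omega_0$ is an arbitrary topological signature (i.e., $\Omega_n\neq\emptyset$ for some $n\ge1$), then the free Stone topological algebra $\overline{\Omega}_X\mathcal{S}t_\Omega$ is not profinite.
   Context: $\Omega=\biguplus_n\Omega_n$ is a topological signature. A Stone topological $\Omega$-algebra is a compact Hausdorff 0-dimensional space $A$ with continuous evaluation maps $\Omega_n\times A^n\to A$; $\mathcal{S}t_\Omega$ is the class of all of them. $\overline{\Omega}_X\mathcal{S}t_\Omega$ is the free Stone topological algebra over $X$: a Stone topological $\Omega$-algebra with a continuous map $\iota$ from $X$ whose image generates a dense subalgebra, such that every continuous map from $X$ into a Stone topological $\Omega$-algebra $T$ factors uniquely as $\hat\varphi\circ\iota$ with $\hat\varphi$ a continuous homomorphism. A topological algebra is profinite if it is compact and any two distinct elements are separated by a continuous homomorphism into a finite discrete $\Omega$-algebra. *)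

theory Defs
  imports "HOL-Analysis.Analysis"
begin

text \<open>A topological signature is a family Om of topological spaces indexed by arities:
  Om n is the space of n-ary operation symbols (Omega_n); Omega is their disjoint union.
  An Omega-algebra on a topology T (carrier = topspace T) is given by an evaluation
  ev n f xs for f in Omega_n and xs in A^n, where A^n is the product space
  product_topology (\<lambda>_. T) {..<n} (tuples are extensional functions on {..<n}).\<close>

definition top_algebra ::
  "(nat \<Rightarrow> 'o topology) \<Rightarrow> 'a topology \<Rightarrow> (nat \<Rightarrow> 'o \<Rightarrow> (nat \<Rightarrow> 'a) \<Rightarrow> 'a) \<Rightarrow> bool" where
  "top_algebra Om T ev \<longleftrightarrow>
     (\<forall>n. continuous_map (prod_topology (Om n) (product_topology (\<lambda>_. T) {..<n})) T
            (\<lambda>(f, xs). ev n f xs))"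

definition stone_space :: "'a topology \<Rightarrow> bool" where
  "stone_space T \<longleftrightarrow> compact_space T \<and> Hausdorff_space T \<and> T dim_le 0"

definition stone_algebra ::
  "(nat \<Rightarrow> 'o topology) \<Rightarrow> 'a topology \<Rightarrow> (nat \<Rightarrow> 'o \<Rightarrow> (nat \<Rightarrow> 'a) \<Rightarrow> 'a) \<Rightarrow> bool" where
  "stone_algebra Om T ev \<longleftrightarrow> stone_space T \<and> top_algebra Om T ev"

definition is_hom ::
  "(nat \<Rightarrow> 'o topology) \<Rightarrow> 'a set \<Rightarrow> (nat \<Rightarrow> 'o \<Rightarrow> (nat \<Rightarrow> 'a) \<Rightarrow> 'a)
     \<Rightarrow> 'b set \<Rightarrow> (nat \<Rightarrow> 'o \<Rightarrow> (nat \<Rightarrow> 'b) \<Rightarrow> 'b) \<Rightarrow> ('a \<Rightarrow> 'b) \<Rightarrow> bool" where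
  "is_hom Om A evA B evB h \<longleftrightarrow>
     h ` A \<subseteq> B \<and>
     (\<forall>n. \<forall>f \<in> topspace (Om n). \<forall>xs \<in> PiE {..<n} (\<lambda>_. A).
        h (evA n f xs) = evB n f (\<lambda>i\<in>{..<n}. h (xs i)))"

definition cont_hom ::
  "(nat \<Rightarrow> 'o topology) \<Rightarrow> 'a topology \<Rightarrow> (nat \<Rightarrow> 'o \<Rightarrow> (nat \<Rightarrow> 'a) \<Rightarrow> 'a)
     \<Rightarrow> 'b topology \<Rightarrow> (nat \<Rightarrow> 'o \<Rightarrow> (nat \<Rightarrow> 'b) \<Rightarrow> 'b) \<Rightarrow> ('a \<Rightarrow> 'b) \<Rightarrow> bool" where
  "cont_hom Om TA evA TB evB h \<longleftrightarrow>
     continuous_map TA TB h \<and> is_hom Om (topspace TA) evA (topspace TB) evB h"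

definition is_subalgebra ::
  "(nat \<Rightarrow> 'o topology) \<Rightarrow> 'a set \<Rightarrow> (nat \<Rightarrow> 'o \<Rightarrow> (nat \<Rightarrow> 'a) \<Rightarrow> 'a) \<Rightarrow> 'a set \<Rightarrow> bool" where
  "is_subalgebra Om A ev S \<longleftrightarrow>
     S \<subseteq> A \<and> (\<forall>n. \<forall>f \<in> topspace (Om n). \<forall>xs \<in> PiE {..<n} (\<lambda>_. S). ev n f xs \<in> S)"

definition generated_subalgebra ::
  "(nat \<Rightarrow> 'o topology) \<Rightarrow> 'a set \<Rightarrow> (nat \<Rightarrow> 'o \<Rightarrow> (nat \<Rightarrow> 'a) \<Rightarrow> 'a) \<Rightarrow> 'a set \<Rightarrow> 'a set" where
  "generated_subalgebra Om A ev G = \<Inter> {S. is_subalgebra Om A ev S \<and> G \<subseteq> S}"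

text \<open>The universal property is required for all
  Stone topological algebras whose carrier lies in the type ('x + 'o) list set set.
  (Every continuous map into a Stone algebra factors through the closed subalgebra generated
  by its image, which has a dense subset of cardinality at most |('x+'o) list| and hence
  cardinality at most 2^2^|('x+'o) list|; so this is equivalent to the universal property
  with respect to all Stone topological algebras.)  Uniqueness is up to equality on the carrier.\<close>

definition free_stone_algebra ::
  "(nat \<Rightarrow> 'o topology) \<Rightarrow> 'x topology \<Rightarrow> 'a topology \<Rightarrow> (nat \<Rightarrow> 'o \<Rightarrow> (nat \<Rightarrow> 'a) \<Rightarrow> 'a)
     \<Rightarrow> ('x \<Rightarrow> 'a) \<Rightarrow> bool" where
  "free_stone_algebra Om X F evF \<iota> \<longleftrightarrow>
     stone_algebra Om F evF \<and>
     continuous_map X F \<iota> \<and>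
     F closure_of (generated_subalgebra Om (topspace F) evF (\<iota> ` topspace X)) = topspace F \<and>
     (\<forall>(T :: ('x + 'o) list set set topology) evT \<phi>.
        stone_algebra Om T evT \<and> continuous_map X T \<phi> \<longrightarrow>
        (\<exists>h. cont_hom Om F evF T evT h \<and> (\<forall>x \<in> topspace X. h (\<iota> x) = \<phi> x) \<and>
             (\<forall>h'. cont_hom Om F evF T evT h' \<and> (\<forall>x \<in> topspace X. h' (\<iota> x) = \<phi> x)
                   \<longrightarrow> (\<forall>y \<in> topspace F. h' y = h y))))"

text \<open>Profinite: compact, and distinct elements are separated by a continuous homomorphism
  into a finite discrete topological Omega-algebra (finite algebras taken, w.l.o.g., on nat).\<close>

definition profinite_algebra ::
  "(nat \<Rightarrow> 'o topology) \<Rightarrow> 'a topology \<Rightarrow> (nat \<Rightarrow> 'o \<Rightarrow> (nat \<Rightarrow> 'a) \<Rightarrow> 'a) \<Rightarrow> bool" where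
  "profinite_algebra Om T ev \<longleftrightarrow>
     top_algebra Om T ev \<and> compact_space T \<and>
     (\<forall>a \<in> topspace T. \<forall>b \<in> topspace T. a \<noteq> b \<longrightarrow>
        (\<exists>(B :: nat set) evB h. finite B \<and> top_algebra Om (discrete_topology B) evB \<and>
           cont_hom Om T ev (discrete_topology B) evB h \<and> h a \<noteq> h b))"

end

theory Submission
  imports Defs
begin

(*
  Fix an operation symbol f of arity n >= 1 and let u y = f(y, ..., y).  In a finite set
  with N elements every self-map g satisfies g^(i!) = g^(N!) for i >= N, and g^(N!) is
  idempotent.  Hence, if a1 is a cluster point of the sequence u^(i!) (iota x) and a2 one of
  u^(i!) a1, every continuous homomorphism into a finite algebra identifies a1 and a2.
  They are separated, however, in the Cantor space of bit sequences made into a Stone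
  algebra by letting every operation shift its first argument: sending X to the indicator
  of the factorials, a1 goes to a sequence with first bit 1 and bit 0 at every j! with
  j >= 2 (because i! + j! is never a factorial), so a2 goes to a sequence with first bit 0.
*)

lemma funpow_closed:
  assumes "\<And>y. y \<in> A \<Longrightarrow> u y \<in> A" "y \<in> A"
  shows "(u ^^ m) y \<in> A"
  by (induction m) (use assms in auto)

lemma funpow_intertwine:
  assumes "\<And>y. y \<in> A \<Longrightarrow> u y \<in> A" "\<And>y. y \<in> A \<Longrightarrow> h (u y) = g (h y)" "y \<in> A"
  shows "h ((u ^^ m) y) = (g ^^ m) (h y)"
  by (induction m) (use assms funpow_closed[of A u, OF assms(1,3)] in auto)

lemma funpow_periodic_finite:
  assumes "finite B" "g ` B \<subseteq> B" "b \<in> B" "card B \<le> m" "m \<le> m'" "fact (card B) dvd m' - m"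
  shows "(g ^^ m') b = (g ^^ m) b"
proof -
  have orbit: "(g ^^ i) b \<in> B" for i
    using funpow_closed[of B g b] assms(2,3) by blast
  have "\<not> inj_on (\<lambda>i. (g ^^ i) b) {0..card B}"
  proof
    assume "inj_on (\<lambda>i. (g ^^ i) b) {0..card B}"
    from card_inj_on_le[OF this _ assms(1)] orbit show False
      by auto
  qed
  then obtain p q where pq: "p < q" "q \<le> card B" "(g ^^ q) b = (g ^^ p) b"
    unfolding inj_on_def by (metis atLeastAtMost_iff linorder_neqE_nat)
  define d where "d = q - p"
  have step: "(g ^^ (k + d)) b = (g ^^ k) b" if "p \<le> k" for k
  proof -
    have "k + d = (k - p) + q" "k = (k - p) + p"
      using that pq by (auto simp: d_def)
    then show ?thesis
      using pq(3) by (metis comp_apply funpow_add)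
  qed
  have period: "(g ^^ (k + t * d)) b = (g ^^ k) b" if "p \<le> k" for k t
  proof (induction t)
    case (Suc t)
    have "(g ^^ (k + Suc t * d)) b = (g ^^ ((k + t * d) + d)) b"
      by (simp add: algebra_simps)
    also have "\<dots> = (g ^^ (k + t * d)) b"
      using that by (intro step) simp
    finally show ?case
      using Suc.IH by simp
  qed simp
  have "d dvd fact (card B)"
    using pq by (simp add: d_def dvd_fact)
  then have "d dvd m' - m"
    using assms(6) dvd_trans by blast
  then obtain t where "m' = m + t * d"
    using assms(5) by (metis dvdE le_add_diff_inverse mult.commute)
  then show ?thesis
    using period[of m t] pq assms(4) by simp
qed

lemma fact_add_fact_not_fact:
  assumes "j \<le> i" "2 \<le> i"
  shows "fact i + fact j \<noteq> (fact k :: nat)"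
proof
  assume k: "fact i + fact j = (fact k :: nat)"
  have "(fact i :: nat) < fact k"
    using k fact_gt_zero[of j, where 'a=nat] by linarith
  then have "i < k"
    by (meson fact_mono leI not_le)
  have "(fact j :: nat) \<le> fact i"
    using assms(1) by (rule fact_mono)
  also have "(fact i :: nat) < i * fact i"
    using assms(2) by simp
  finally have "(fact j :: nat) < i * fact i" .
  then have "(fact k :: nat) < fact (Suc i)"
    using k by (simp add: algebra_simps)
  moreover have "(fact (Suc i) :: nat) \<le> fact k"
    using \<open>i < k\<close> by (intro fact_mono) simp
  ultimately show False
    by simp
qed

definition cluster_point :: "'a topology \<Rightarrow> (nat \<Rightarrow> 'a) \<Rightarrow> 'a \<Rightarrow> bool" where
  "cluster_point X s z \<longleftrightarrow> (\<forall>J. z \<in> X closure_of (s ` {J..}))"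

lemma cluster_point_in_topspace: "cluster_point X s z \<Longrightarrow> z \<in> topspace X"
  unfolding cluster_point_def using closure_of_subset_topspace by fast

lemma compact_space_cluster_point:
  assumes "compact_space X" "range s \<subseteq> topspace X"
  obtains z where "cluster_point X s z"
proof -
  define C where "C J = X closure_of (s ` {J..})" for J
  have "s J \<in> C J" for J
    unfolding C_def using closure_of_subset[of "s ` {J..}" X] assms(2) by blast
  then have "C J \<noteq> {}" for J
    by blast
  moreover have "decseq C"
    unfolding decseq_def C_def by (simp add: closure_of_mono image_mono)
  ultimately have "(\<Inter>J. C J) \<noteq> {}"
    using compact_space_imp_nest[OF assms(1), of C] by (simp add: C_def)
  then show thesis
    using that unfolding cluster_point_def C_def by blast
qed

lemma compact_space_orbit_cluster_point:
  assumes "compact_space X" "\<And>y. y \<in> topspace X \<Longrightarrow> u y \<in> topspace X" "a \<in> topspace X"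
  obtains z where "cluster_point X (\<lambda>i. (u ^^ t i) a) z"
proof -
  have "range (\<lambda>i. (u ^^ t i) a) \<subseteq> topspace X"
    using funpow_closed[of "topspace X" u a] assms(2,3) by blast
  then show thesis
    by (rule compact_space_cluster_point[OF assms(1)]) (rule that)
qed

lemma cluster_point_continuous_map_closedin:
  assumes "cluster_point X s z" "continuous_map X Y k" "closedin Y C"
    and "eventually (\<lambda>i. s i \<in> topspace X \<and> k (s i) \<in> C) sequentially"
  shows "k z \<in> C"
proof -
  let ?S = "{y \<in> topspace X. k y \<in> C}"
  obtain J where "\<forall>i\<ge>J. s i \<in> ?S"
    using assms(4) by (auto simp: eventually_sequentially)
  then have "s ` {J..} \<subseteq> ?S"
    by auto
  then have "X closure_of (s ` {J..}) \<subseteq> ?S"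
    by (rule closure_of_minimal) (rule closedin_continuous_map_preimage[OF assms(2,3)])
  then show ?thesis
    using assms(1) unfolding cluster_point_def by blast
qed

lemma stone_space_product_finite_discrete:
  assumes "finite A"
  shows "stone_space (product_topology (\<lambda>_. discrete_topology A) I)"
proof -
  let ?P = "product_topology (\<lambda>_. discrete_topology A) I"
  have "neighbourhood_base_of (\<lambda>U. closedin ?P U \<and> openin ?P U) ?P"
    unfolding neighbourhood_base_of
  proof (intro allI impI)
    fix W x
    assume "openin ?P W \<and> x \<in> W"
    then obtain U where U: "finite {i \<in> I. U i \<noteq> A}" "\<forall>i\<in>I. U i \<subseteq> A"
      "x \<in> PiE I U" "PiE I U \<subseteq> W"
      unfolding openin_product_topology_alt by auto
    have "openin ?P (PiE I U)"
      using U(1,2) by (simp add: openin_PiE_gen)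
    moreover have "closedin ?P (PiE I U)"
      using U(2) by (simp add: closedin_product_topology)
    ultimately show
      "\<exists>U V. openin ?P U \<and> (closedin ?P V \<and> openin ?P V) \<and> x \<in> U \<and> U \<subseteq> V \<and> V \<subseteq> W"
      using U(3,4) by blast
  qed
  then show ?thesis
    using assms
    by (simp add: stone_space_def dimension_le_0_neighbourhood_base_of_clopen
        compact_space_product_topology compact_space_discrete_topology Hausdorff_space_product_topology)
qed

lemma homeomorphic_stone_space:
  "X homeomorphic_space Y \<Longrightarrow> stone_space X \<longleftrightarrow> stone_space Y"
  by (simp add: stone_space_def homeomorphic_compact_space homeomorphic_Hausdorff_space
      homeomorphic_space_dimension_le)

lemma homeomorphic_maps_pullback_topology:
  assumes "\<And>x. x \<in> topspace S \<Longrightarrow> dec (enc x) = x"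
  shows "homeomorphic_maps (pullback_topology (enc ` topspace S) dec S) S dec enc"
  unfolding homeomorphic_maps_def
proof (intro conjI)
  show "continuous_map (pullback_topology (enc ` topspace S) dec S) S dec"
    using continuous_map_pullback[OF continuous_map_id] by (simp add: o_def)
  have "continuous_map S S (dec \<circ> enc)"
    using continuous_map_id by (rule continuous_map_eq) (simp add: assms)
  then show "continuous_map S (pullback_topology (enc ` topspace S) dec S) enc"
    by (rule continuous_map_pullback') blast
qed (auto simp: topspace_pullback_topology assms)

abbreviation cantor :: "(nat \<Rightarrow> bool) topology" where
  "cantor \<equiv> product_topology (\<lambda>_. discrete_topology UNIV) UNIV"

lemma stone_space_cantor: "stone_space cantor"
  by (simp add: stone_space_product_finite_discrete)

lemma topspace_cantor [simp]: "topspace cantor = UNIV"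
  by (simp add: PiE_UNIV_domain)

definition shift :: "(nat \<Rightarrow> 'a) \<Rightarrow> nat \<Rightarrow> 'a" where
  "shift x i = x (Suc i)"

lemma funpow_shift: "(shift ^^ m) x = (\<lambda>i. x (i + m))"
  by (induction m) (simp_all add: shift_def)

lemma continuous_map_shift: "continuous_map cantor cantor shift"
  unfolding continuous_map_componentwise_UNIV shift_def
  by (auto intro: continuous_map_product_projection)

lemma closedin_cantor_coordinate: "closedin cantor {x. x m = b}"
proof -
  have "closedin cantor {x \<in> topspace cantor. x m \<in> {b}}"
    by (rule closedin_continuous_map_preimage[OF continuous_map_product_projection]) auto
  then show ?thesis
    by simp
qed

definition diagonal_op :: "(nat \<Rightarrow> 'o \<Rightarrow> (nat \<Rightarrow> 'a) \<Rightarrow> 'a) \<Rightarrow> nat \<Rightarrow> 'o \<Rightarrow> 'a \<Rightarrow> 'a" where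
  "diagonal_op ev n f y = ev n f (\<lambda>i\<in>{..<n}. y)"

lemma diagonal_op_in_topspace:
  assumes "top_algebra Om T ev" "f \<in> topspace (Om n)" "y \<in> topspace T"
  shows "diagonal_op ev n f y \<in> topspace T"
proof -
  let ?P = "prod_topology (Om n) (product_topology (\<lambda>_. T) {..<n})"
  have "continuous_map ?P T (\<lambda>(f, xs). ev n f xs)"
    using assms(1) unfolding top_algebra_def by blast
  moreover have "(f, \<lambda>i\<in>{..<n}. y) \<in> topspace ?P"
    using assms(2,3) by auto
  ultimately have "(\<lambda>(f, xs). ev n f xs) (f, \<lambda>i\<in>{..<n}. y) \<in> topspace T"
    by (rule funcset_mem[OF continuous_map_funspace])
  then show ?thesis
    by (simp add: diagonal_op_def)
qed

lemma is_hom_diagonal_op: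
  assumes "is_hom Om A evA B evB h" "f \<in> topspace (Om n)" "y \<in> A"
  shows "h (diagonal_op evA n f y) = diagonal_op evB n f (h y)"
proof -
  have "(\<lambda>i\<in>{..<n}. y) \<in> PiE {..<n} (\<lambda>_. A)"
    using assms(3) by simp
  then have "h (evA n f (\<lambda>i\<in>{..<n}. y)) = evB n f (\<lambda>i\<in>{..<n}. h ((\<lambda>i\<in>{..<n}. y) i))"
    using assms(1,2) unfolding is_hom_def by blast
  also have "(\<lambda>i\<in>{..<n}. h ((\<lambda>i\<in>{..<n}. y) i)) = (\<lambda>i\<in>{..<n}. h y)"
    by (rule restrict_ext) simp
  finally show ?thesis
    unfolding diagonal_op_def .
qed

text \<open>For nullary symbols the tuple xs is the constant undefined, whence the condition on the
  whole range of g.\<close>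

lemma top_algebra_first_argument:
  assumes "continuous_map T T g" "range g \<subseteq> topspace T"
  shows "top_algebra Om T (\<lambda>m f xs. g (xs 0))"
  unfolding top_algebra_def
proof
  fix m
  let ?P = "prod_topology (Om m) (product_topology (\<lambda>_. T) {..<m})"
  show "continuous_map ?P T (\<lambda>(f, xs). g (xs 0))"
  proof (cases "m = 0")
    case True
    have "continuous_map ?P T (\<lambda>_. g undefined)"
      using assms(2) by auto
    then show ?thesis
      by (rule continuous_map_eq) (auto simp: True)
  next
    case False
    then have "continuous_map (product_topology (\<lambda>_. T) {..<m}) T (\<lambda>xs. xs 0)"
      using continuous_map_product_projection[of 0 "{..<m}" "\<lambda>_. T"] by simp
    then have "continuous_map ?P T (g \<circ> (\<lambda>xs. xs 0) \<circ> snd)"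
      by (intro continuous_map_compose[OF continuous_map_snd] continuous_map_compose[OF _ assms(1)])
    then show ?thesis
      by (simp add: case_prod_beta' comp_def)
  qed
qed

lemma finite_discrete_map_merges_factorial_cluster_points:
  assumes k: "continuous_map X (discrete_topology B) k" and B: "finite B"
    and u: "\<And>y. y \<in> topspace X \<Longrightarrow> u y \<in> topspace X"
    and k_u: "\<And>y. y \<in> topspace X \<Longrightarrow> k (u y) = g (k y)"
    and a0: "a0 \<in> topspace X"
    and a1: "cluster_point X (\<lambda>i. (u ^^ fact i) a0) a1"
    and a2: "cluster_point X (\<lambda>i. (u ^^ fact i) a1) a2"
  shows "k a1 = k a2"
proof -
  let ?K = "k ` topspace X"
  let ?N = "card ?K"
  define \<pi> where "\<pi> = g ^^ fact ?N"
  have K_B: "?K \<subseteq> B"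
    using continuous_map_image_subset_topspace[OF k] by simp
  have K: "finite ?K" "g ` ?K \<subseteq> ?K"
    using finite_subset[OF K_B B] u by (auto simp flip: k_u)
  have orbit: "(u ^^ m) a \<in> topspace X \<and> k ((u ^^ m) a) = (g ^^ m) (k a)"
    if "a \<in> topspace X" for a m
    using funpow_closed[of _ u, OF u that] funpow_intertwine[of _ u k g, OF u k_u that] by blast
  have stable: "(g ^^ fact i) b = \<pi> b" if "b \<in> ?K" "?N \<le> i" for b i
    unfolding \<pi>_def using that
    by (intro funpow_periodic_finite[OF K that(1)])
      (auto intro: fact_ge_self fact_mono dvd_diff_nat fact_dvd)
  have idempotent: "\<pi> (\<pi> b) = \<pi> b" if "b \<in> ?K" for b
    using funpow_periodic_finite[OF K that, of "fact ?N" "fact ?N + fact ?N"]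
    by (simp add: \<pi>_def funpow_add fact_ge_self)
  have limit: "k z = \<pi> (k a)" if "a \<in> topspace X" "cluster_point X (\<lambda>i. (u ^^ fact i) a) z" for a z
  proof -
    have "k z \<in> {\<pi> (k a)}"
    proof (rule cluster_point_continuous_map_closedin[OF that(2) k])
      show "closedin (discrete_topology B) {\<pi> (k a)}"
        using orbit[OF that(1), of "fact ?N"] K_B by (auto simp: \<pi>_def)
      show "\<forall>\<^sub>F i in sequentially.
          (u ^^ fact i) a \<in> topspace X \<and> k ((u ^^ fact i) a) \<in> {\<pi> (k a)}"
        using eventually_ge_at_top[of ?N] by eventually_elim (use orbit stable that(1) in auto)
    qed
    then show ?thesis
      by simp
  qed
  have "k a1 = \<pi> (k a0)"
    using limit[OF a0 a1] .
  moreover have "k a2 = \<pi> (k a1)"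
    using limit[OF cluster_point_in_topspace[OF a1] a2] .
  ultimately show ?thesis
    using idempotent a0 by simp
qed

lemma shift_map_separates_factorial_cluster_points:
  assumes p: "continuous_map X cantor p"
    and u: "\<And>y. y \<in> topspace X \<Longrightarrow> u y \<in> topspace X"
    and p_u: "\<And>y. y \<in> topspace X \<Longrightarrow> p (u y) = shift (p y)"
    and a0: "a0 \<in> topspace X" "p a0 = (\<lambda>k. \<exists>i. k = fact i)"
    and a1: "cluster_point X (\<lambda>i. (u ^^ fact i) a0) a1"
    and a2: "cluster_point X (\<lambda>i. (u ^^ fact i) a1) a2"
  shows "p a1 \<noteq> p a2"
proof -
  have coordinate: "p z m = b"
    if "a \<in> topspace X" "cluster_point X (\<lambda>i. (u ^^ fact i) a) z"
      and "\<forall>\<^sub>F i in sequentially. p a (m + fact i) = b" for a z m b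
  proof -
    have "p z \<in> {x. x m = b}"
    proof (rule cluster_point_continuous_map_closedin[OF that(2) p closedin_cantor_coordinate])
      show "\<forall>\<^sub>F i in sequentially.
          (u ^^ fact i) a \<in> topspace X \<and> p ((u ^^ fact i) a) \<in> {x. x m = b}"
        using that(3) by eventually_elim
          (use funpow_closed[of _ u, OF u that(1)] funpow_intertwine[of _ u p shift, OF u p_u that(1)]
            in \<open>simp add: funpow_shift\<close>)
    qed
    then show ?thesis
      by simp
  qed
  have "p a1 0 = True"
    by (rule coordinate[OF a0(1) a1]) (auto simp: a0(2) intro: always_eventually)
  have a1_fact: "\<not> p a1 (fact j)" if "2 \<le> j" for j
  proof -
    have "\<forall>\<^sub>F i in sequentially. p a0 (fact j + fact i) = False"
      using eventually_ge_at_top[of j]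
    proof eventually_elim
      case (elim i)
      then have "fact i + fact j \<noteq> (fact k :: nat)" for k
        using that by (intro fact_add_fact_not_fact) auto
      then show ?case
        unfolding a0(2) by (metis add.commute)
    qed
    then show ?thesis
      using coordinate[OF a0(1) a1] by blast
  qed
  have "p a2 0 = False"
  proof (rule coordinate[OF cluster_point_in_topspace[OF a1] a2])
    show "\<forall>\<^sub>F i in sequentially. p a1 (0 + fact i) = False"
      using eventually_ge_at_top[of 2] by eventually_elim (simp add: a1_fact)
  qed
  with \<open>p a1 0 = True\<close> show ?thesis
    by auto
qed

lemma free_stone_algebra_shift_map:
  fixes Om :: "nat \<Rightarrow> 'o topology" and X :: "'x topology" and F :: "'a topology"
  assumes free: "free_stone_algebra Om X F evF \<iota>" and n: "1 \<le> n" "f \<in> topspace (Om n)"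
  obtains p where "continuous_map F cantor p"
    and "\<And>y. y \<in> topspace F \<Longrightarrow> p (diagonal_op evF n f y) = shift (p y)"
    and "\<And>x. x \<in> topspace X \<Longrightarrow> p (\<iota> x) = c"
proof -
  \<comment> \<open>The universal property only concerns algebras carried by ('x + 'o) list set set,
    so the Cantor space is copied into that type along i \<mapsto> {replicate i undefined}.\<close>
  define enc :: "(nat \<Rightarrow> bool) \<Rightarrow> ('x + 'o) list set set"
    where "enc x = (\<lambda>i. {replicate i undefined}) ` {i. x i}" for x
  define dec :: "('x + 'o) list set set \<Rightarrow> nat \<Rightarrow> bool"
    where "dec S i \<longleftrightarrow> {replicate i undefined} \<in> S" for S i
  have dec_enc: "dec (enc x) = x" for x
    by (auto simp: enc_def dec_def fun_eq_iff)
  define T where "T = pullback_topology (range enc) dec cantor"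
  have homeo: "homeomorphic_maps T cantor dec enc"
    unfolding T_def using homeomorphic_maps_pullback_topology[of cantor dec enc] dec_enc by simp
  then have dec_cont: "continuous_map T cantor dec" and enc_cont: "continuous_map cantor T enc"
    by (auto simp: homeomorphic_maps_def)
  define g where "g = enc \<circ> shift \<circ> dec"
  have "continuous_map T T g"
    unfolding g_def
    by (intro continuous_map_compose[OF dec_cont]
        continuous_map_compose[OF continuous_map_shift enc_cont])
  moreover have "range g \<subseteq> topspace T"
    by (auto simp: g_def T_def topspace_pullback_topology)
  moreover have "stone_space T"
    using homeomorphic_stone_space[of T cantor] homeo stone_space_cantor
    by (auto simp: homeomorphic_space_def)
  ultimately have "stone_algebra Om T (\<lambda>m f xs. g (xs 0))"
    by (simp add: stone_algebra_def top_algebra_first_argument)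
  moreover have "continuous_map X T (\<lambda>_. enc c)"
    by (auto simp: T_def topspace_pullback_topology)
  ultimately obtain h where h: "cont_hom Om F evF T (\<lambda>m f xs. g (xs 0)) h"
    and h_\<iota>: "\<forall>x\<in>topspace X. h (\<iota> x) = enc c"
    using free unfolding free_stone_algebra_def by blast
  show thesis
  proof
    show "continuous_map F cantor (dec \<circ> h)"
      using h dec_cont by (auto simp: cont_hom_def intro: continuous_map_compose)
  next
    fix y
    assume "y \<in> topspace F"
    with h n have "h (diagonal_op evF n f y) = diagonal_op (\<lambda>m f xs. g (xs 0)) n f (h y)"
      by (intro is_hom_diagonal_op) (auto simp: cont_hom_def)
    then have "h (diagonal_op evF n f y) = g (h y)"
      using n(1) by (simp add: diagonal_op_def)
    then show "(dec \<circ> h) (diagonal_op evF n f y) = shift ((dec \<circ> h) y)"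
      by (simp add: g_def dec_enc)
  next
    fix x
    assume "x \<in> topspace X"
    then show "(dec \<circ> h) (\<iota> x) = c"
      using h_\<iota> dec_enc by simp
  qed
qed

lemma free_stone_algebra_factorial_cluster_points_ne:
  assumes free: "free_stone_algebra Om X F evF \<iota>" and n: "1 \<le> n" "f \<in> topspace (Om n)"
    and x: "x \<in> topspace X"
    and a1: "cluster_point F (\<lambda>i. (diagonal_op evF n f ^^ fact i) (\<iota> x)) a1"
    and a2: "cluster_point F (\<lambda>i. (diagonal_op evF n f ^^ fact i) a1) a2"
  shows "a1 \<noteq> a2"
proof -
  obtain p where p: "continuous_map F cantor p"
    "\<And>y. y \<in> topspace F \<Longrightarrow> p (diagonal_op evF n f y) = shift (p y)"
    "\<And>x. x \<in> topspace X \<Longrightarrow> p (\<iota> x) = (\<lambda>k. \<exists>i. k = fact i)"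
    by (rule free_stone_algebra_shift_map[OF free n, where c = "\<lambda>k. \<exists>i. k = fact i"])
      (rule that)
  have "stone_algebra Om F evF" "continuous_map X F \<iota>"
    using free by (simp_all add: free_stone_algebra_def)
  then have F: "top_algebra Om F evF" "\<iota> x \<in> topspace F"
    using x by (auto simp: stone_algebra_def continuous_map_def)
  have u: "diagonal_op evF n f y \<in> topspace F" if "y \<in> topspace F" for y
    using F(1) n(2) that by (rule diagonal_op_in_topspace)
  have "p a1 \<noteq> p a2"
    using shift_map_separates_factorial_cluster_points[OF p(1) u p(2) F(2) p(3)[OF x] a1 a2] .
  then show ?thesis
    by blast
qed

lemma profinite_algebra_factorial_cluster_points_eq:
  assumes profinite: "profinite_algebra Om F evF" and f: "f \<in> topspace (Om n)"
    and a0: "a0 \<in> topspace F"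
    and a1: "cluster_point F (\<lambda>i. (diagonal_op evF n f ^^ fact i) a0) a1"
    and a2: "cluster_point F (\<lambda>i. (diagonal_op evF n f ^^ fact i) a1) a2"
  shows "a1 = a2"
proof (rule ccontr)
  assume "a1 \<noteq> a2"
  moreover have "\<forall>a\<in>topspace F. \<forall>b\<in>topspace F. a \<noteq> b \<longrightarrow>
      (\<exists>(B :: nat set) evB k. finite B \<and> top_algebra Om (discrete_topology B) evB \<and>
         cont_hom Om F evF (discrete_topology B) evB k \<and> k a \<noteq> k b)"
    using profinite unfolding profinite_algebra_def by blast
  ultimately obtain B :: "nat set" and evB k
    where B: "finite B" and k: "cont_hom Om F evF (discrete_topology B) evB k" and "k a1 \<noteq> k a2"
    using cluster_point_in_topspace[OF a1] cluster_point_in_topspace[OF a2] by blast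
  have "k a1 = k a2"
  proof (rule finite_discrete_map_merges_factorial_cluster_points[OF _ B _ _ a0 a1 a2])
    show "continuous_map F (discrete_topology B) k"
      using k by (simp add: cont_hom_def)
    show "diagonal_op evF n f y \<in> topspace F" if "y \<in> topspace F" for y
      using profinite f that by (intro diagonal_op_in_topspace) (auto simp: profinite_algebra_def)
    have "is_hom Om (topspace F) evF B evB k"
      using k by (simp add: cont_hom_def)
    then show "k (diagonal_op evF n f y) = diagonal_op evB n f (k y)" if "y \<in> topspace F" for y
      using f that by (rule is_hom_diagonal_op)
  qed
  with \<open>k a1 \<noteq> k a2\<close> show False
    by contradiction
qed

theorem theorem4p18:
  fixes Om :: "nat \<Rightarrow> 'o topology" and X :: "'x topology"
    and F :: "'a topology" and evF :: "nat \<Rightarrow> 'o \<Rightarrow> (nat \<Rightarrow> 'a) \<Rightarrow> 'a" and \<iota> :: "'x \<Rightarrow> 'a"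
  assumes "topspace X \<noteq> {}"
    and "\<exists>n\<ge>1. topspace (Om n) \<noteq> {}"
    and "free_stone_algebra Om X F evF \<iota>"
  shows "\<not> profinite_algebra Om F evF"
proof
  assume profinite: "profinite_algebra Om F evF"
  obtain x where x: "x \<in> topspace X"
    using assms(1) by blast
  obtain n f where n: "1 \<le> n" "f \<in> topspace (Om n)"
    using assms(2) by blast
  let ?u = "diagonal_op evF n f"
  have "stone_algebra Om F evF" "continuous_map X F \<iota>"
    using assms(3) by (simp_all add: free_stone_algebra_def)
  then have F: "compact_space F" "\<iota> x \<in> topspace F" "top_algebra Om F evF"
    using x by (auto simp: stone_algebra_def stone_space_def continuous_map_def)
  have u: "?u y \<in> topspace F" if "y \<in> topspace F" for y
    using F(3) n(2) that by (rule diagonal_op_in_topspace)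
  obtain a1 where a1: "cluster_point F (\<lambda>i. (?u ^^ fact i) (\<iota> x)) a1"
    using compact_space_orbit_cluster_point[OF F(1) u F(2)] .
  obtain a2 where a2: "cluster_point F (\<lambda>i. (?u ^^ fact i) a1) a2"
    using compact_space_orbit_cluster_point[OF F(1) u cluster_point_in_topspace[OF a1]] .
  have "a1 \<noteq> a2"
    using free_stone_algebra_factorial_cluster_points_ne[OF assms(3) n x a1 a2] .
  moreover have "a1 = a2"
    using profinite_algebra_factorial_cluster_points_eq[OF profinite n(2) F(2) a1 a2] .
  ultimately show False
    by contradiction
qed

end
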